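(* Let $\Omega\subset\mathbb{Z}_2^n\setminus\{\mathbf 0\}$ be nonempty and such that the Hamming weights $s(\beta)$, $\beta\in\Omega$, are either all even or all odd. Let $k=\min_{\beta\in\Omega}s(\beta)$ and let $H_\Omega(t)$ be the transition matrix of $\mathrm{NEPS}(P_3,\ldots,P_3;\Omega)$. Then $H_\Omega\!\left(\frac{2\pi}{(\sqrt2)^k}\right)=I$; that is, $\mathrm{NEPS}(P_3,\ldots,P_3;\Omega)$ is periodic at time $\frac{2\pi}{(\sqrt2)^k}$.
   Context: $P_3$ is the path on three vertices. For graphs $G_1,\dots,G_n$ and $\Omega\subset\mathbb{Z}_2^n\setminus\{\mathbf 0\}$, $\mathrm{NEPS}(G_1,\dots,G_n;\Omega)$ is the graph on $V(G_1)\times\cdots\times V(G_n)$ with adjacency matrix $\sum_{\beta\in\Omega}A_1^{\beta_1}\otimes\cdots\otimes A_n^{\beta_n}$, $A_i$ the adjacency matrix of $G_i$ (equivalently, $(x_i)$ and $(y_i)$ are adjacent iff for some $\beta\in\Omega$, $x_i=y_i$ when $\beta_i=0$ and $x_iy_i\in E(G_i)$ when $\beta_i=1$). The Hamming weight $s(\beta)$ is the number of entries of $\beta$ equal to $1$. The transition matrix of a graph with adjacency matrix $A$ is $H(t)=\exp(-itA)$. A graph is periodic at time $\tau\neq0$ if $H(\tau)=\gamma I$ for some $\gamma$ with $|\gamma|=1$. *)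

theory Defs
  imports Complex_Main "Jordan_Normal_Form.Matrix"
begin

definition P3_adj :: "nat \<Rightarrow> nat \<Rightarrow> complex" where
  "P3_adj a b = (if (a = 0 \<and> b = 1) \<or> (a = 1 \<and> b = 0) \<or> (a = 1 \<and> b = 2) \<or> (a = 2 \<and> b = 1)
                  then 1 else 0)"

text \<open>A vertex of the product V(P_3)^n is encoded as a number x < 3^n; its i-th
  coordinate is the i-th base-3 digit.\<close>
definition digit3 :: "nat \<Rightarrow> nat \<Rightarrow> nat" where
  "digit3 x i = (x div 3 ^ i) mod 3"

text \<open>An element beta of Z_2^n is encoded by its support, a subset of {0..<n};
  the Hamming weight s(beta) is then card beta.\<close>
definition NEPS_P3_adj :: "nat \<Rightarrow> nat set set \<Rightarrow> complex mat" where
  "NEPS_P3_adj n \<Omega> = mat (3 ^ n) (3 ^ n) (\<lambda>(x, y).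
      \<Sum>\<beta>\<in>\<Omega>. \<Prod>i<n. (if i \<in> \<beta> then P3_adj (digit3 x i) (digit3 y i)
                          else (if digit3 x i = digit3 y i then 1 else 0)))"

definition transition_matrix :: "complex mat \<Rightarrow> real \<Rightarrow> complex mat" where
  "transition_matrix A t = mat (dim_row A) (dim_col A) (\<lambda>(i, j).
      \<Sum>m. ((- \<i> * complex_of_real t) ^ m / of_nat (fact m)) * (A ^\<^sub>m m) $$ (i, j))"

end

theory Submission
  imports Defs
begin

text \<open>The adjacency matrix of P_3 has the orthogonal eigenvectors (1,0,-1), (1,\<surd>2,1), (1,-\<surd>2,1)
  with eigenvalues 0, \<surd>2, -\<surd>2. Tensoring them gives an orthogonal eigenbasis of every
  NEPS of copies of P_3; the eigenvalue belonging to a choice of one eigenvector per coordinate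
  is a sum over \<beta> \<in> \<Omega> of terms \<plusminus>(\<surd>2)^s(\<beta>) or 0. When all s(\<beta>) have the parity of
  k = min s(\<beta>), every eigenvalue is an integer multiple of (\<surd>2)^k, so at time 2\<pi>/(\<surd>2)^k every
  phase exp(-it\<lambda>) equals 1 and the transition matrix is the identity.\<close>

locale spectral_decomposition =
  fixes A :: "'a::field mat" and N :: nat and E :: "'e set"
    and eig :: "'e \<Rightarrow> 'a" and u :: "'e \<Rightarrow> nat \<Rightarrow> 'a" and c :: "'e \<Rightarrow> 'a"
  assumes carrier: "A \<in> carrier_mat N N"
    and finite_E: "finite E"
    and orthogonal: "\<And>e f. e \<in> E \<Longrightarrow> f \<in> E \<Longrightarrow>
                       (\<Sum>z<N. u e z * u f z) = (if e = f then c e else 0)"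
    and norm_nonzero: "\<And>e. e \<in> E \<Longrightarrow> c e \<noteq> 0"
    and complete: "\<And>x y. x < N \<Longrightarrow> y < N \<Longrightarrow>
                     (\<Sum>e\<in>E. u e x * u e y / c e) = (if x = y then 1 else 0)"
    and entry: "\<And>x y. x < N \<Longrightarrow> y < N \<Longrightarrow>
                  A $$ (x, y) = (\<Sum>e\<in>E. eig e * u e x * u e y / c e)"
begin

lemma pow_entry:
  assumes "x < N" "y < N"
  shows "(A ^\<^sub>m m) $$ (x, y) = (\<Sum>e\<in>E. eig e ^ m * u e x * u e y / c e)"
  using assms
proof (induction m arbitrary: y)
  case 0
  then show ?case using carrier complete by simp
next
  case (Suc m)
  define a where "a e = eig e ^ m * u e x / c e" for e
  define b where "b f = eig f * u f y / c f" for f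
  have "(A ^\<^sub>m Suc m) $$ (x, y) = (\<Sum>z<N. (A ^\<^sub>m m) $$ (x, z) * A $$ (z, y))"
    using Suc.prems carrier by (simp add: scalar_prod_def atLeast0LessThan)
  also have "\<dots> = (\<Sum>z<N. (\<Sum>e\<in>E. a e * u e z) * (\<Sum>f\<in>E. b f * u f z))"
    using Suc.prems by (intro sum.cong refl) (simp add: Suc.IH entry a_def b_def mult_ac)
  also have "\<dots> = (\<Sum>z<N. \<Sum>e\<in>E. \<Sum>f\<in>E. a e * b f * (u e z * u f z))"
    by (simp add: sum_product mult_ac)
  also have "\<dots> = (\<Sum>e\<in>E. \<Sum>f\<in>E. \<Sum>z<N. a e * b f * (u e z * u f z))"
    by (subst sum.swap) (intro sum.cong refl sum.swap)
  also have "\<dots> = (\<Sum>e\<in>E. \<Sum>f\<in>E. a e * b f * (\<Sum>z<N. u e z * u f z))"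
    by (simp add: sum_distrib_left)
  also have "\<dots> = (\<Sum>e\<in>E. \<Sum>f\<in>E. a e * b f * (if e = f then c e else 0))"
    by (intro sum.cong refl) (simp add: orthogonal)
  also have "\<dots> = (\<Sum>e\<in>E. a e * b e * c e)"
    using finite_E by (simp add: if_distrib[of "\<lambda>x. _ * x"] cong: if_cong)
  also have "\<dots> = (\<Sum>e\<in>E. eig e ^ Suc m * u e x * u e y / c e)"
    by (intro sum.cong refl) (simp add: a_def b_def norm_nonzero field_simps)
  finally show ?case .
qed

end

lemma transition_matrix_eq_one_mat:
  fixes A :: "complex mat"
  assumes "spectral_decomposition A N E eig u c"
    and phase: "\<And>e. e \<in> E \<Longrightarrow> exp (- \<i> * complex_of_real t * eig e) = 1"
  shows "transition_matrix A t = 1\<^sub>m N"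
proof -
  interpret spectral_decomposition A N E eig u c by fact
  define z where "z = - \<i> * complex_of_real t"
  show ?thesis
  proof (rule eq_matI)
    fix x y assume "x < dim_row (1\<^sub>m N)" "y < dim_col (1\<^sub>m N)"
    then have xy: "x < N" "y < N" by simp_all
    define K where "K e = u e x * u e y / c e" for e
    have "(\<lambda>m. \<Sum>e\<in>E. (z * eig e) ^ m /\<^sub>R fact m * K e) sums (\<Sum>e\<in>E. exp (z * eig e) * K e)"
      by (intro sums_sum sums_mult2 exp_converges)
    moreover have "(\<lambda>m. \<Sum>e\<in>E. (z * eig e) ^ m /\<^sub>R fact m * K e)
                 = (\<lambda>m. z ^ m / of_nat (fact m) * (A ^\<^sub>m m) $$ (x, y))"
      by (auto simp: pow_entry[OF xy] K_def sum_distrib_left scaleR_conv_of_real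
                     power_mult_distrib divide_inverse mult_ac intro!: sum.cong)
    ultimately have "transition_matrix A t $$ (x, y) = (\<Sum>e\<in>E. exp (z * eig e) * K e)"
      using xy carrier by (simp add: transition_matrix_def z_def sums_iff)
    also have "\<dots> = 1\<^sub>m N $$ (x, y)"
      using xy phase by (simp add: z_def K_def complete)
    finally show "transition_matrix A t $$ (x, y) = 1\<^sub>m N $$ (x, y)" .
  qed (use carrier in \<open>simp_all add: transition_matrix_def\<close>)
qed

lemma digit3_lt: "digit3 x i < 3"
  by (simp add: digit3_def)

lemma digit3_0: "d < 3 \<Longrightarrow> digit3 (3 * q + d) 0 = d"
  by (simp add: digit3_def)

lemma digit3_Suc: "d < 3 \<Longrightarrow> digit3 (3 * q + d) (Suc i) = digit3 q i"
  by (simp add: digit3_def div_mult2_eq)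

lemma sum_lessThan_3: "(\<Sum>d<(3::nat). h d) = h 0 + h 1 + h 2"
  by (simp add: eval_nat_numeral add.assoc)

lemma sum_lessThan_3_mult:
  "(\<Sum>x<3 * N. g x) = (\<Sum>q<N. \<Sum>d<(3::nat). g (3 * q + d))"
proof -
  have "(\<Sum>x<3 * N. g x) = (\<Sum>q<N. sum g {q * 3..<q * 3 + 3})"
    using sum.nat_group[where g=g and n=N and k=3] by (simp add: mult.commute)
  also have "\<dots> = (\<Sum>q<N. \<Sum>d<(3::nat). g (3 * q + d))"
  proof (rule sum.cong[OF refl])
    fix q :: nat
    have "{q * 3..<q * 3 + 3} = {3 * q, 3 * q + 1, 3 * q + 2}" by auto
    then show "sum g {q * 3..<q * 3 + 3} = (\<Sum>d<(3::nat). g (3 * q + d))"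
      by (simp add: sum_lessThan_3 add.assoc)
  qed
  finally show ?thesis .
qed

lemma sum_prod_digit3:
  "(\<Sum>x<3 ^ n. \<Prod>i<n. f i (digit3 x i)) = (\<Prod>i<n. \<Sum>d<3. (f i d :: 'a::comm_semiring_1))"
proof (induction n arbitrary: f)
  case 0
  then show ?case by simp
next
  case (Suc n)
  have "(\<Sum>x<3 ^ Suc n. \<Prod>i<Suc n. f i (digit3 x i))
      = (\<Sum>q<3 ^ n. \<Sum>d<3. f 0 d * (\<Prod>i<n. f (Suc i) (digit3 q i)))"
    unfolding power_Suc sum_lessThan_3_mult
    by (intro sum.cong refl, simp only: prod.lessThan_Suc_shift) (simp add: digit3_0 digit3_Suc)
  also have "\<dots> = (\<Sum>d<3. f 0 d) * (\<Sum>q<3 ^ n. \<Prod>i<n. f (Suc i) (digit3 q i))"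
    by (simp add: sum_distrib_left sum_distrib_right sum.swap[of _ "{..<3 ^ n}"] mult.commute)
  also have "\<dots> = (\<Prod>i<Suc n. \<Sum>d<3. f i d)"
    by (simp only: Suc.IH[of "\<lambda>i. f (Suc i)"] prod.lessThan_Suc_shift)
  finally show ?case .
qed

lemma digit3_inject:
  "x < 3 ^ n \<Longrightarrow> y < 3 ^ n \<Longrightarrow> (\<forall>i<n. digit3 x i = digit3 y i) \<Longrightarrow> x = y"
proof (induction n arbitrary: x y)
  case 0
  then show ?case by simp
next
  case (Suc n)
  have "digit3 x 0 = digit3 y 0" using Suc.prems by auto
  then have mod_eq: "x mod 3 = y mod 3" by (simp add: digit3_def)
  have "\<forall>i<n. digit3 (x div 3) i = digit3 (y div 3) i"
    using Suc.prems(3) by (auto simp: digit3_def div_mult2_eq)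
  moreover have "x div 3 < 3 ^ n" "y div 3 < 3 ^ n" using Suc.prems by auto
  ultimately have "x div 3 = y div 3" using Suc.IH by blast
  then show ?case using mod_eq by (metis div_mult_mod_eq)
qed

lemma delta_eq_prod_digit3:
  assumes "x < 3 ^ n" "y < 3 ^ n"
  shows "(if x = y then 1 else 0 :: 'a::comm_semiring_1)
           = (\<Prod>i<n. if digit3 x i = digit3 y i then 1 else 0)"
proof (cases "x = y")
  case False
  then obtain i where "i < n" "digit3 x i \<noteq> digit3 y i" using digit3_inject[OF assms] by blast
  then show ?thesis using False by (auto intro!: prod_zero)
qed simp

definition P3_eigsign :: "nat \<Rightarrow> int" where
  "P3_eigsign j = (if j = 1 then 1 else if j = 2 then -1 else 0)"

definition P3_eigval :: "nat \<Rightarrow> complex" where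
  "P3_eigval j = of_int (P3_eigsign j) * sqrt 2"

definition P3_eigvec :: "nat \<Rightarrow> nat \<Rightarrow> complex" where
  "P3_eigvec j a = (if j = 0 then (if a = 0 then 1 else if a = 1 then 0 else -1)
                    else if a = 1 then P3_eigval j else 1)"

definition P3_eignorm :: "nat \<Rightarrow> complex" where
  "P3_eignorm j = (if j = 0 then 2 else 4)"

lemma P3_eignorm_nonzero: "P3_eignorm j \<noteq> 0"
  by (simp add: P3_eignorm_def)

lemma sqrt2_mult_self: "complex_of_real (sqrt 2) * sqrt 2 = 2"
  by (simp flip: of_real_mult)

lemma less_3_cases: "(a::nat) < 3 \<Longrightarrow> a = 0 \<or> a = 1 \<or> a = 2"
  by auto

lemma P3_adj_spectral:
  "a < 3 \<Longrightarrow> b < 3 \<Longrightarrow>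
     P3_adj a b = (\<Sum>j<3. P3_eigval j * P3_eigvec j a * P3_eigvec j b / P3_eignorm j)"
  by (drule less_3_cases)+
     (auto simp: sum_lessThan_3 P3_adj_def P3_eigval_def P3_eigvec_def P3_eignorm_def
                 P3_eigsign_def field_simps sqrt2_mult_self)

lemma P3_eigvec_complete:
  "a < 3 \<Longrightarrow> b < 3 \<Longrightarrow>
     (if a = b then 1 else 0) = (\<Sum>j<3. P3_eigvec j a * P3_eigvec j b / P3_eignorm j)"
  by (drule less_3_cases)+
     (auto simp: sum_lessThan_3 P3_eigval_def P3_eigvec_def P3_eignorm_def
                 P3_eigsign_def field_simps sqrt2_mult_self)

lemma P3_eigvec_orthogonal:
  "j < 3 \<Longrightarrow> l < 3 \<Longrightarrow>
     (\<Sum>d<3. P3_eigvec j d * P3_eigvec l d) = (if j = l then 1 else 0) * P3_eignorm j"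
  by (drule less_3_cases)+
     (auto simp: sum_lessThan_3 P3_eigval_def P3_eigvec_def P3_eignorm_def
                 P3_eigsign_def field_simps sqrt2_mult_self)

text \<open>Eigen-data of the NEPS are indexed by e < 3^n, whose i-th base-3 digit selects the
  eigenvector of P_3 used in coordinate i.\<close>

definition NEPS_P3_eigval :: "nat \<Rightarrow> nat set set \<Rightarrow> nat \<Rightarrow> complex" where
  "NEPS_P3_eigval n \<Omega> e = (\<Sum>\<beta>\<in>\<Omega>. \<Prod>i<n. if i \<in> \<beta> then P3_eigval (digit3 e i) else 1)"

definition NEPS_P3_eigvec :: "nat \<Rightarrow> nat \<Rightarrow> nat \<Rightarrow> complex" where
  "NEPS_P3_eigvec n e x = (\<Prod>i<n. P3_eigvec (digit3 e i) (digit3 x i))"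

definition NEPS_P3_eignorm :: "nat \<Rightarrow> nat \<Rightarrow> complex" where
  "NEPS_P3_eignorm n e = (\<Prod>i<n. P3_eignorm (digit3 e i))"

lemma NEPS_P3_adj_entry:
  assumes "x < 3 ^ n" "y < 3 ^ n"
  shows "NEPS_P3_adj n \<Omega> $$ (x, y) = (\<Sum>e<3 ^ n.
           NEPS_P3_eigval n \<Omega> e * NEPS_P3_eigvec n e x * NEPS_P3_eigvec n e y / NEPS_P3_eignorm n e)"
proof -
  have "NEPS_P3_adj n \<Omega> $$ (x, y) = (\<Sum>\<beta>\<in>\<Omega>. \<Prod>i<n. \<Sum>j<3.
          (if i \<in> \<beta> then P3_eigval j else 1) * P3_eigvec j (digit3 x i) * P3_eigvec j (digit3 y i)
            / P3_eignorm j)"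
    using assms unfolding NEPS_P3_adj_def
    by (auto intro!: sum.cong prod.cong simp: P3_adj_spectral P3_eigvec_complete digit3_lt)
  also have "\<dots> = (\<Sum>\<beta>\<in>\<Omega>. \<Sum>e<3 ^ n. \<Prod>i<n.
          (if i \<in> \<beta> then P3_eigval (digit3 e i) else 1)
            * P3_eigvec (digit3 e i) (digit3 x i) * P3_eigvec (digit3 e i) (digit3 y i)
            / P3_eignorm (digit3 e i))"
    by (subst sum_prod_digit3) simp
  also have "\<dots> = (\<Sum>e<3 ^ n.
           NEPS_P3_eigval n \<Omega> e * NEPS_P3_eigvec n e x * NEPS_P3_eigvec n e y / NEPS_P3_eignorm n e)"
    by (subst sum.swap)
       (simp add: NEPS_P3_eigval_def NEPS_P3_eigvec_def NEPS_P3_eignorm_def prod.distrib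
                  prod_dividef sum_distrib_right sum_divide_distrib)
  finally show ?thesis .
qed

lemma NEPS_P3_spectral_decomposition:
  "spectral_decomposition (NEPS_P3_adj n \<Omega>) (3 ^ n) {..<3 ^ n}
     (NEPS_P3_eigval n \<Omega>) (NEPS_P3_eigvec n) (NEPS_P3_eignorm n)"
proof
  show "NEPS_P3_adj n \<Omega> \<in> carrier_mat (3 ^ n) (3 ^ n)"
    by (simp add: NEPS_P3_adj_def)
next
  fix e f :: nat assume "e \<in> {..<3 ^ n}" "f \<in> {..<3 ^ n}"
  have "(\<Sum>z<3 ^ n. NEPS_P3_eigvec n e z * NEPS_P3_eigvec n f z)
      = (\<Prod>i<n. \<Sum>d<3. P3_eigvec (digit3 e i) d * P3_eigvec (digit3 f i) d)"
    unfolding NEPS_P3_eigvec_def prod.distrib[symmetric] by (rule sum_prod_digit3)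
  also have "\<dots> = (\<Prod>i<n. if digit3 e i = digit3 f i then 1 else 0) * NEPS_P3_eignorm n e"
    by (simp add: P3_eigvec_orthogonal digit3_lt NEPS_P3_eignorm_def prod.distrib)
  finally show "(\<Sum>z<3 ^ n. NEPS_P3_eigvec n e z * NEPS_P3_eigvec n f z)
      = (if e = f then NEPS_P3_eignorm n e else 0)"
    using \<open>e \<in> _\<close> \<open>f \<in> _\<close> by (simp add: delta_eq_prod_digit3[symmetric])
next
  fix x y :: nat assume "x < 3 ^ n" "y < 3 ^ n"
  show "(\<Sum>e\<in>{..<3 ^ n}. NEPS_P3_eigvec n e x * NEPS_P3_eigvec n e y / NEPS_P3_eignorm n e)
      = (if x = y then 1 else 0)"
  proof -
    have "(\<Sum>e\<in>{..<3 ^ n}. NEPS_P3_eigvec n e x * NEPS_P3_eigvec n e y / NEPS_P3_eignorm n e)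
        = (\<Sum>e<3 ^ n. \<Prod>i<n. P3_eigvec (digit3 e i) (digit3 x i) * P3_eigvec (digit3 e i) (digit3 y i)
                                  / P3_eignorm (digit3 e i))"
      by (simp add: NEPS_P3_eigvec_def NEPS_P3_eignorm_def prod.distrib prod_dividef)
    also have "\<dots> = (\<Prod>i<n. \<Sum>j<3. P3_eigvec j (digit3 x i) * P3_eigvec j (digit3 y i) / P3_eignorm j)"
      by (rule sum_prod_digit3)
    also have "\<dots> = (\<Prod>i<n. if digit3 x i = digit3 y i then 1 else 0)"
      by (simp add: P3_eigvec_complete digit3_lt)
    finally show ?thesis using \<open>x < 3 ^ n\<close> \<open>y < 3 ^ n\<close> by (simp add: delta_eq_prod_digit3)
  qed
qed (simp_all add: NEPS_P3_adj_entry NEPS_P3_eignorm_def P3_eignorm_nonzero)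

lemma NEPS_P3_eigval_eq:
  assumes "\<Omega> \<subseteq> Pow {..<n}"
  shows "NEPS_P3_eigval n \<Omega> e
           = (\<Sum>\<beta>\<in>\<Omega>. of_int (\<Prod>i\<in>\<beta>. P3_eigsign (digit3 e i)) * of_real (sqrt 2) ^ card \<beta>)"
  unfolding NEPS_P3_eigval_def
proof (rule sum.cong[OF refl])
  fix \<beta> assume "\<beta> \<in> \<Omega>"
  then have "{..<n} \<inter> \<beta> = \<beta>" using assms by auto
  then have "(\<Prod>i<n. if i \<in> \<beta> then P3_eigval (digit3 e i) else 1) = (\<Prod>i\<in>\<beta>. P3_eigval (digit3 e i))"
    by (simp add: prod.inter_restrict[symmetric])
  then show "(\<Prod>i<n. if i \<in> \<beta> then P3_eigval (digit3 e i) else 1)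
      = of_int (\<Prod>i\<in>\<beta>. P3_eigsign (digit3 e i)) * of_real (sqrt 2) ^ card \<beta>"
    by (simp add: P3_eigval_def prod.distrib)
qed

text \<open>Each term is an integer multiple of (\<surd>2)^k because (\<surd>2)^(k + 2j) = (\<surd>2)^k 2^j.\<close>

lemma exp_sum_sqrt2_powers_eq_1:
  fixes a :: "'b \<Rightarrow> int" and w :: "'b \<Rightarrow> nat"
  assumes "\<And>\<beta>. \<beta> \<in> B \<Longrightarrow> k \<le> w \<beta> \<and> even (w \<beta> - k)"
  shows "exp (- \<i> * complex_of_real (2 * pi / sqrt 2 ^ k)
                * (\<Sum>\<beta>\<in>B. of_int (a \<beta>) * of_real (sqrt 2) ^ w \<beta>)) = 1"
proof -
  define M :: int where "M = (\<Sum>\<beta>\<in>B. a \<beta> * 2 ^ ((w \<beta> - k) div 2))"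
  have term_eq: "complex_of_real (2 * pi / sqrt 2 ^ k) * (of_int (a \<beta>) * of_real (sqrt 2) ^ w \<beta>)
        = complex_of_real (2 * pi) * of_int (a \<beta> * 2 ^ ((w \<beta> - k) div 2))"
    if \<beta>: "\<beta> \<in> B" for \<beta>
  proof -
    obtain j where j: "w \<beta> = k + 2 * j"
      using assms[OF \<beta>] by (metis evenE le_add_diff_inverse)
    have "sqrt 2 ^ w \<beta> = sqrt 2 ^ k * 2 ^ j"
      unfolding j by (simp add: power_add power_mult)
    then have "of_real (sqrt 2) ^ w \<beta> = complex_of_real (sqrt 2 ^ k * 2 ^ j)"
      by (metis of_real_power)
    then show ?thesis using j by (simp add: field_simps)
  qed
  have "- \<i> * complex_of_real (2 * pi / sqrt 2 ^ k) * (\<Sum>\<beta>\<in>B. of_int (a \<beta>) * of_real (sqrt 2) ^ w \<beta>)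
      = - \<i> * (\<Sum>\<beta>\<in>B. complex_of_real (2 * pi) * of_int (a \<beta> * 2 ^ ((w \<beta> - k) div 2)))"
    unfolding mult.assoc sum_distrib_left by (simp only: term_eq cong: sum.cong)
  also have "\<dots> = - \<i> * complex_of_real (2 * pi * of_int M)"
    by (simp add: M_def sum_distrib_left)
  also have "exp \<dots> = cis (2 * pi * of_int (- M))"
    by (simp add: cis_conv_exp)
  also have "\<dots> = 1"
    by (rule cis_multiple_2pi) simp
  finally show ?thesis .
qed

theorem theorem3p4:
  fixes n :: nat and \<Omega> :: "nat set set"
  assumes "\<Omega> \<subseteq> Pow {0..<n}"
    and "{} \<notin> \<Omega>"
    and "\<Omega> \<noteq> {}"
    and "(\<forall>\<beta>\<in>\<Omega>. even (card \<beta>)) \<or> (\<forall>\<beta>\<in>\<Omega>. odd (card \<beta>))"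
  shows "transition_matrix (NEPS_P3_adj n \<Omega>) (2 * pi / (sqrt 2) ^ (Min (card ` \<Omega>)))
           = 1\<^sub>m (3 ^ n)"
proof (rule transition_matrix_eq_one_mat[OF NEPS_P3_spectral_decomposition])
  define k where "k = Min (card ` \<Omega>)"
  have fin: "finite \<Omega>" using assms(1) by (rule finite_subset) simp
  have "k \<in> card ` \<Omega>" unfolding k_def using fin assms(3) by simp
  then obtain \<beta>0 where "\<beta>0 \<in> \<Omega>" "card \<beta>0 = k" by auto
  then have parity: "k \<le> card \<beta> \<and> even (card \<beta> - k)" if "\<beta> \<in> \<Omega>" for \<beta>
    using that fin assms(4) unfolding k_def by auto
  fix e
  show "exp (- \<i> * complex_of_real (2 * pi / sqrt 2 ^ k) * NEPS_P3_eigval n \<Omega> e) = 1"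
    using assms(1) by (simp only: NEPS_P3_eigval_eq atLeast0LessThan exp_sum_sqrt2_powers_eq_1 parity)
qed

end
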